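(* Let $\mathcal H$ be a hypothesis on a Borel set $\mathcal Z\subseteq\mathbb R^d$. An optimal e-class for $\mathcal H$ exists if and only if the set of all maximal e-variables for $\mathcal H$ is a majorising e-class. If an optimal e-class exists, it is unique, it coincides with the set of all maximal e-variables, and it is the only majorising e-class all of whose elements are maximal.
   Context: A hypothesis is a non-empty set $\mathcal H$ of Borel probability measures on $\mathcal Z$. An e-variable for $\mathcal H$ is a Borel $E:\mathcal Z\to[0,+\infty)$ with $\mathbb E_P[E]\le1$ for all $P\in\mathcal H$; $\mathcal E_{\mathcal H}$ denotes the set of all e-variables, and an e-class is any subset of $\mathcal E_{\mathcal H}$. $f\succeq f'$ means $f(z)\ge f'(z)$ for all $z$; $f\succ f'$ means $f\succeq f'$ and $f(z)>f'(z)$ for some $z$. An e-variable $E$ is maximal if there is no $E'\in\mathcal E_{\mathcal H}$ with $E'\succ E$. An e-class $\mathcal E$ is majorising if for every $E'\in\mathcal E_{\mathcal H}$ there is $E\in\mathcal E$ with $E\succeq E'$. A majorising e-class is optimal if it is contained in every other majorising e-class. *)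

theory Defs
  imports "HOL-Probability.Probability"
begin

text \<open>The sample space is a Borel set Z of R^d, represented as a set Z of type real ^ 'd.
  Functions on Z are represented as HOL functions on the whole type that vanish outside Z.\<close>

definition is_hypothesis :: "(real ^ 'd) set \<Rightarrow> (real ^ 'd) measure set \<Rightarrow> bool" where
  "is_hypothesis Z H \<longleftrightarrow> H \<noteq> {} \<and>
     (\<forall>P\<in>H. prob_space P \<and> sets P = sets (restrict_space borel Z))"

definition evars :: "(real ^ 'd) set \<Rightarrow> (real ^ 'd) measure set \<Rightarrow> ((real ^ 'd) \<Rightarrow> real) set" where
  "evars Z H = {E. E \<in> borel_measurable (restrict_space borel Z)
      \<and> (\<forall>z\<in>Z. 0 \<le> E z) \<and> (\<forall>z. z \<notin> Z \<longrightarrow> E z = 0)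
      \<and> (\<forall>P\<in>H. (\<integral>\<^sup>+ z. ennreal (E z) \<partial>P) \<le> 1)}"

definition fgeq :: "(real ^ 'd) set \<Rightarrow> ((real ^ 'd) \<Rightarrow> real) \<Rightarrow> ((real ^ 'd) \<Rightarrow> real) \<Rightarrow> bool" where
  "fgeq Z f f' \<longleftrightarrow> (\<forall>z\<in>Z. f z \<ge> f' z)"

definition fgt :: "(real ^ 'd) set \<Rightarrow> ((real ^ 'd) \<Rightarrow> real) \<Rightarrow> ((real ^ 'd) \<Rightarrow> real) \<Rightarrow> bool" where
  "fgt Z f f' \<longleftrightarrow> fgeq Z f f' \<and> (\<exists>z\<in>Z. f z > f' z)"

definition maximal_evar :: "(real ^ 'd) set \<Rightarrow> (real ^ 'd) measure set \<Rightarrow> ((real ^ 'd) \<Rightarrow> real) \<Rightarrow> bool" where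
  "maximal_evar Z H E \<longleftrightarrow> E \<in> evars Z H \<and> \<not> (\<exists>E'\<in>evars Z H. fgt Z E' E)"

definition maximal_evars :: "(real ^ 'd) set \<Rightarrow> (real ^ 'd) measure set \<Rightarrow> ((real ^ 'd) \<Rightarrow> real) set" where
  "maximal_evars Z H = {E. maximal_evar Z H E}"

definition majorising :: "(real ^ 'd) set \<Rightarrow> (real ^ 'd) measure set \<Rightarrow> ((real ^ 'd) \<Rightarrow> real) set \<Rightarrow> bool" where
  "majorising Z H C \<longleftrightarrow> C \<subseteq> evars Z H \<and> (\<forall>E'\<in>evars Z H. \<exists>E\<in>C. fgeq Z E E')"

definition optimal :: "(real ^ 'd) set \<Rightarrow> (real ^ 'd) measure set \<Rightarrow> ((real ^ 'd) \<Rightarrow> real) set \<Rightarrow> bool" where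
  "optimal Z H C \<longleftrightarrow> majorising Z H C \<and> (\<forall>C'. majorising Z H C' \<longrightarrow> C \<subseteq> C')"

end

theory Submission
  imports Defs
begin

text \<open>Only the order structure of the e-variables matters. Since e-variables vanish outside Z, the only e-variable dominating a maximal
  one is itself, so every majorising class contains all maximal e-variables. Conversely, a
  non-maximal member E of an optimal class could be exchanged for a strictly larger e-variable,
  giving a majorising class without E. Hence an optimal class is exactly the set of maximal
  e-variables, which yields existence, uniqueness and the characterisation at once.\<close>

lemma evars_eqI:
  assumes "E \<in> evars Z H" "E' \<in> evars Z H" "\<And>z. z \<in> Z \<Longrightarrow> E z = E' z"
  shows "E = E'"
proof
  fix z show "E z = E' z"
    using assms by (cases "z \<in> Z") (auto simp: evars_def)
qed

lemma maximal_evar_dominated_eq: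
  assumes "maximal_evar Z H E" "E' \<in> evars Z H" "fgeq Z E' E"
  shows "E' = E"
proof (rule evars_eqI)
  show "E \<in> evars Z H" using assms(1) by (simp add: maximal_evar_def)
  have "\<not> fgt Z E' E" using assms(1,2) by (auto simp: maximal_evar_def)
  then show "E' z = E z" if "z \<in> Z" for z
    using assms(3) that by (force simp: fgt_def fgeq_def)
qed fact

lemma maximal_evars_subset_majorising:
  assumes "majorising Z H C"
  shows "maximal_evars Z H \<subseteq> C"
proof
  fix E assume "E \<in> maximal_evars Z H"
  then have E: "maximal_evar Z H E" by (simp add: maximal_evars_def)
  then obtain E' where "E' \<in> C" "fgeq Z E' E"
    using assms by (auto simp: majorising_def maximal_evar_def)
  moreover have "E' \<in> evars Z H"
    using \<open>E' \<in> C\<close> assms by (auto simp: majorising_def)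
  ultimately show "E \<in> C"
    using maximal_evar_dominated_eq[OF E] by auto
qed

lemma majorising_exchange:
  assumes "majorising Z H C" "E \<in> C" "E' \<in> evars Z H" "fgeq Z E' E"
  shows "majorising Z H (insert E' (C - {E}))"
  unfolding majorising_def
proof (intro conjI ballI)
  show "insert E' (C - {E}) \<subseteq> evars Z H"
    using assms(1,3) by (auto simp: majorising_def)
next
  fix F assume "F \<in> evars Z H"
  then obtain G where "G \<in> C" "fgeq Z G F"
    using assms(1) by (auto simp: majorising_def)
  moreover have "fgeq Z E' F" if "G = E"
    using that \<open>fgeq Z G F\<close> assms(4) by (fastforce simp: fgeq_def)
  ultimately show "\<exists>G\<in>insert E' (C - {E}). fgeq Z G F"
    by (cases "G = E") auto
qed

lemma optimal_subset_maximal_evars: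
  assumes "optimal Z H C"
  shows "C \<subseteq> maximal_evars Z H"
proof
  fix E assume "E \<in> C"
  have maj: "majorising Z H C" using assms by (simp add: optimal_def)
  show "E \<in> maximal_evars Z H"
  proof (rule ccontr)
    assume "E \<notin> maximal_evars Z H"
    moreover have "E \<in> evars Z H" using maj \<open>E \<in> C\<close> by (auto simp: majorising_def)
    ultimately obtain E' where E': "E' \<in> evars Z H" "fgt Z E' E"
      by (auto simp: maximal_evars_def maximal_evar_def)
    then have "majorising Z H (insert E' (C - {E}))"
      using majorising_exchange[OF maj \<open>E \<in> C\<close>] by (simp add: fgt_def)
    then have "C \<subseteq> insert E' (C - {E})" using assms by (simp add: optimal_def)
    moreover have "E' \<noteq> E" using E'(2) by (auto simp: fgt_def)
    ultimately show False using \<open>E \<in> C\<close> by auto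
  qed
qed

lemma optimal_eq_maximal_evars:
  assumes "optimal Z H C"
  shows "C = maximal_evars Z H"
proof
  show "C \<subseteq> maximal_evars Z H" using assms by (rule optimal_subset_maximal_evars)
  show "maximal_evars Z H \<subseteq> C"
    using assms by (intro maximal_evars_subset_majorising) (simp add: optimal_def)
qed

lemma optimal_maximal_evarsI:
  assumes "majorising Z H (maximal_evars Z H)"
  shows "optimal Z H (maximal_evars Z H)"
  using assms maximal_evars_subset_majorising by (auto simp: optimal_def)

lemma majorising_of_maximal_evars_eq:
  assumes "majorising Z H M" "\<forall>E\<in>M. maximal_evar Z H E"
  shows "M = maximal_evars Z H"
  using assms maximal_evars_subset_majorising[OF assms(1)]
  by (auto simp: maximal_evars_def)

theorem lemma2:
  fixes Z :: "(real ^ 'd) set" and H :: "(real ^ 'd) measure set"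
  assumes "Z \<in> sets borel"
    and "is_hypothesis Z H"
  shows "((\<exists>C. optimal Z H C) \<longleftrightarrow> majorising Z H (maximal_evars Z H))
    \<and> (\<forall>C. optimal Z H C \<longrightarrow>
          (\<forall>C'. optimal Z H C' \<longrightarrow> C' = C)
          \<and> C = maximal_evars Z H
          \<and> (\<forall>M. majorising Z H M \<and> (\<forall>E\<in>M. maximal_evar Z H E) \<longrightarrow> M = C))"
proof (intro conjI allI impI)
  show "(\<exists>C. optimal Z H C) \<longleftrightarrow> majorising Z H (maximal_evars Z H)"
    using optimal_eq_maximal_evars optimal_maximal_evarsI
    by (metis optimal_def)
next
  fix C C' assume "optimal Z H C" "optimal Z H C'"
  then show "C' = C" using optimal_eq_maximal_evars by blast
next
  fix C assume "optimal Z H C"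
  then show "C = maximal_evars Z H" by (rule optimal_eq_maximal_evars)
next
  fix C M assume "optimal Z H C" "majorising Z H M \<and> (\<forall>E\<in>M. maximal_evar Z H E)"
  then show "M = C"
    using majorising_of_maximal_evars_eq optimal_eq_maximal_evars by metis
qed

end
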